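(* Let $k\ge 2$ and $\Delta\ge 2$ be integers and $f(z)=\frac{(1-z^{k-1})^{\Delta-1}}{1+(1-z^{k-1})^{\Delta-1}}$ for $z\in[0,1]$. Then $f$ is strictly decreasing on $[0,1]$, and there is a unique $x\in[0,1]$ with $f(x)=x$; this $x$ satisfies $|f'(x)|=\frac{(\Delta-1)(k-1)x^{k-1}(1-x)}{1-x^{k-1}}$. Finally, if $|f'(x)|<1$, then the equation $f(f(z))=z$ for $z\in[0,1]$ is satisfied only by $z=x$. *)

theory Defs
  imports "HOL-Analysis.Analysis"
begin

definition lem56_f :: "nat \<Rightarrow> nat \<Rightarrow> real \<Rightarrow> real" where
  "lem56_f k \<Delta> z = (1 - z ^ (k - 1)) ^ (\<Delta> - 1) / (1 + (1 - z ^ (k - 1)) ^ (\<Delta> - 1))"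

end

theory Submission
  imports Defs
begin

text \<open>
  In the logit coordinate \<open>u = ln t - ln (1 - t)\<close> the map reads \<open>u \<mapsto> d ln (1 - t ^ a)\<close>;
  its slope has absolute value \<open>\<rho> t = d a t ^ a (1 - t) / (1 - t ^ a)\<close>, which at the fixed
  point \<open>x\<close> is \<open>|f' x|\<close>. The derivative of \<open>ln \<rho>\<close> with respect to \<open>u\<close> is
  \<open>a (1 - t) / (1 - t ^ a) - t\<close>, a decreasing function of \<open>t\<close>; hence \<open>ln \<rho>\<close> is concave in \<open>u\<close>
  and \<open>\<rho> \<le> c exp (\<kappa> (u - u\<^sub>x))\<close> with \<open>c = \<rho> x\<close> and \<open>\<kappa>\<close> the rate at \<open>x\<close>.
  Integrating this bound along a 2-cycle \<open>z < x < w\<close> gives, for \<open>\<alpha> = \<kappa> (u\<^sub>x - u\<^sub>z) > 0\<close> and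
  \<open>\<beta> = \<kappa> (u\<^sub>w - u\<^sub>x)\<close>, the inequalities \<open>\<alpha> \<le> c (exp \<beta> - 1)\<close> and \<open>\<beta> \<le> c (1 - exp (- \<alpha>))\<close>.
  As \<open>exp (1 - exp (- \<alpha>)) \<le> 1 + \<alpha>\<close>, they force \<open>\<alpha> \<le> c \<alpha>\<close>, impossible when \<open>c < 1\<close>.
\<close>

text \<open>The map with exponents \<open>a = k - 1\<close> and \<open>d = \<Delta> - 1\<close>, avoiding truncated subtraction.\<close>

definition lem56_g :: "nat \<Rightarrow> nat \<Rightarrow> real \<Rightarrow> real" where
  "lem56_g a d t = (1 - t ^ a) ^ d / (1 + (1 - t ^ a) ^ d)"

definition logit :: "real \<Rightarrow> real" where
  "logit t = ln t - ln (1 - t)"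

definition logit_slope :: "nat \<Rightarrow> nat \<Rightarrow> real \<Rightarrow> real" where
  "logit_slope a d t = real d * real a * t ^ a * (1 - t) / (1 - t ^ a)"

definition log_slope_rate :: "nat \<Rightarrow> real \<Rightarrow> real" where
  "log_slope_rate a t = real a * (1 - t) / (1 - t ^ a) - t"

lemma lem56_f_eq_lem56_g: "lem56_f k \<Delta> = lem56_g (k - 1) (\<Delta> - 1)"
  by (rule ext) (simp add: lem56_f_def lem56_g_def)

lemma lem56_g_strict_decreasing:
  assumes "a \<ge> 1" "d \<ge> 1" "0 \<le> s" "s < t" "t \<le> 1"
  shows "lem56_g a d t < lem56_g a d s"
proof -
  have "t ^ a \<le> 1" using assms by (simp add: power_le_one)
  moreover have "s ^ a < t ^ a" using assms by (simp add: power_strict_mono)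
  ultimately have "(1 - t ^ a) ^ d < (1 - s ^ a) ^ d"
    using assms by (intro power_strict_mono) auto
  moreover have "0 \<le> (1 - t ^ a) ^ d" using \<open>t ^ a \<le> 1\<close> by simp
  ultimately show ?thesis
    unfolding lem56_g_def by (simp add: divide_simps algebra_simps)
qed

lemma lem56_g_bounds:
  assumes "0 \<le> t" "t \<le> 1"
  shows "0 \<le> lem56_g a d t" "lem56_g a d t \<le> 1 / 2"
proof -
  have "t ^ a \<le> 1" using assms by (simp add: power_le_one)
  then have "0 \<le> (1 - t ^ a) ^ d" "(1 - t ^ a) ^ d \<le> 1"
    using assms by (simp_all add: power_le_one)
  then show "0 \<le> lem56_g a d t" "lem56_g a d t \<le> 1 / 2"
    unfolding lem56_g_def by (simp_all add: divide_simps)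
qed

lemma lem56_g_pos:
  assumes "0 \<le> t" "t < 1" "a \<ge> 1"
  shows "0 < lem56_g a d t"
proof -
  have "0 < (1 - t ^ a) ^ d"
    using assms by (simp add: power_less_one_iff)
  then show ?thesis unfolding lem56_g_def by simp
qed

lemma continuous_on_lem56_g: "continuous_on {0..1} (lem56_g a d)"
proof -
  have "1 + (1 - t ^ a) ^ d \<noteq> 0" if "t \<in> {0..1}" for t :: real
    using that by (smt (verit) power_le_one zero_le_power atLeastAtMost_iff)
  then show ?thesis unfolding lem56_g_def by (intro continuous_intros) auto
qed

lemma lem56_g_has_real_derivative:
  assumes "0 < x" "x < 1" "a \<ge> 1"
  shows "(lem56_g a d has_real_derivative
     - (real d * (1 - x ^ a) ^ (d - 1) * (real a * x ^ (a - 1))) / (1 + (1 - x ^ a) ^ d)\<^sup>2) (at x)"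
proof -
  have "0 < (1 - x ^ a) ^ d"
    using assms by (simp add: power_less_one_iff)
  then have "1 + (1 - x ^ a) ^ d \<noteq> 0" by linarith
  then show ?thesis unfolding lem56_g_def[abs_def]
    by (auto intro!: derivative_eq_intros simp: power2_eq_square algebra_simps)
qed

lemma logit_lem56_g:
  assumes "0 \<le> t" "t < 1" "a \<ge> 1"
  shows "logit (lem56_g a d t) = real d * ln (1 - t ^ a)"
proof -
  define y where "y = (1 - t ^ a) ^ d"
  have ta: "t ^ a < 1" using assms by (simp add: power_less_one_iff)
  then have y: "0 < y" unfolding y_def by simp
  have "1 - y / (1 + y) = 1 / (1 + y)" using y by (simp add: field_simps)
  then have "logit (y / (1 + y)) = ln y"
    using y by (simp add: logit_def ln_div)
  also have "ln y = real d * ln (1 - t ^ a)" unfolding y_def using ta by (simp add: ln_realpow)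
  finally show ?thesis unfolding lem56_g_def y_def .
qed

lemma lem56_g_fixed_point:
  assumes "a \<ge> 1" "0 \<le> x" "x \<le> 1" "lem56_g a d x = x"
  shows "0 < x" "x < 1" "(1 - x ^ a) ^ d = x / (1 - x)"
proof -
  have "x ^ a \<le> 1" using assms by (simp add: power_le_one)
  then have y: "0 \<le> (1 - x ^ a) ^ d" by simp
  have e: "(1 - x ^ a) ^ d = x * (1 + (1 - x ^ a) ^ d)"
    using assms(4) y unfolding lem56_g_def by (simp add: divide_simps)
  show "0 < x"
    using e assms(1-3) by (cases "x = 0") (simp_all add: power_0_left)
  show "x < 1"
    using e y assms(3) by (cases "x = 1") simp_all
  then show "(1 - x ^ a) ^ d = x / (1 - x)" using e by (simp add: field_simps)
qed

lemma abs_deriv_lem56_g_fixed_point: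
  assumes "a \<ge> 1" "d \<ge> 1" "0 \<le> x" "x \<le> 1" "lem56_g a d x = x"
  shows "\<bar>deriv (lem56_g a d) x\<bar> = logit_slope a d x"
proof -
  note x = lem56_g_fixed_point[OF assms(1,3-5)]
  define p where "p = (1 - x ^ a) ^ (d - 1)"
  have xa: "x ^ a < 1" using x assms by (simp add: power_less_one_iff)
  have u: "(1 - x ^ a) * p = x / (1 - x)"
    using x(3) assms(2) unfolding p_def by (cases d) auto
  have q: "x ^ a = x * x ^ (a - 1)" using assms(1) by (cases a) auto
  have "1 + (1 - x ^ a) ^ d = 1 / (1 - x)"
    using x by (simp add: field_simps)
  then have "\<bar>deriv (lem56_g a d) x\<bar> = real d * p * (real a * x ^ (a - 1)) * (1 - x)\<^sup>2"
    using DERIV_imp_deriv[OF lem56_g_has_real_derivative[OF x(1,2) assms(1), of d]] x xa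
    by (simp add: p_def abs_mult power_divide)
  also have "p = x / ((1 - x) * (1 - x ^ a))"
    using u xa x(2) by (simp add: eq_divide_eq mult_ac)
  finally show ?thesis
    using x xa unfolding logit_slope_def q by (simp add: divide_simps power2_eq_square)
qed

subsection \<open>Concavity of the log-slope in logit coordinates\<close>

lemma one_minus_div_one_minus_power_eq:
  fixes t :: real
  assumes "0 \<le> t" "t < 1" "a \<ge> 1"
  shows "(1 - t) / (1 - t ^ a) = 1 / (\<Sum>i<a. t ^ i)"
  using one_diff_power_eq[of t a] assms by simp

lemma one_le_sum_powers:
  fixes t :: real
  assumes "0 \<le> t" "a \<ge> 1"
  shows "1 \<le> (\<Sum>i<a. t ^ i)"
  using member_le_sum[of 0 "{..<a}" "\<lambda>i. t ^ i"] assms by simp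

lemma one_minus_div_one_minus_power_antimono:
  fixes s t :: real
  assumes "0 \<le> s" "s \<le> t" "t < 1" "a \<ge> 1"
  shows "(1 - t) / (1 - t ^ a) \<le> (1 - s) / (1 - s ^ a)"
proof -
  have "(\<Sum>i<a. s ^ i) \<le> (\<Sum>i<a. t ^ i)"
    using assms by (intro sum_mono power_mono) auto
  then show ?thesis
    using assms one_le_sum_powers[of s a]
    by (simp add: one_minus_div_one_minus_power_eq frac_le)
qed

lemma log_slope_rate_antimono:
  assumes "0 \<le> s" "s \<le> t" "t < 1" "a \<ge> 1"
  shows "log_slope_rate a t \<le> log_slope_rate a s"
  using mult_left_mono[OF one_minus_div_one_minus_power_antimono[OF assms], of "real a"] assms(2)
  unfolding log_slope_rate_def by simp

lemma log_slope_rate_pos: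
  assumes "0 \<le> x" "x < 1" "a \<ge> 1"
  shows "0 < log_slope_rate a x"
proof -
  have "(\<Sum>i<a. x ^ i) \<le> (\<Sum>i<a. 1)"
    using assms by (intro sum_mono power_le_one) auto
  then have "1 \<le> real a * (1 / (\<Sum>i<a. x ^ i))"
    using one_le_sum_powers[of x a] assms by (simp add: divide_simps)
  then show ?thesis
    using assms unfolding log_slope_rate_def
    by (simp add: one_minus_div_one_minus_power_eq[symmetric])
qed

lemma has_real_derivative_logit:
  assumes "0 < y" "y < 1"
  shows "(logit has_real_derivative 1 / (y * (1 - y))) (at y)"
  unfolding logit_def[abs_def] using assms
  by (auto intro!: derivative_eq_intros simp: divide_simps)

lemma has_real_derivative_log_slope:
  assumes "0 < y" "y < 1" "a \<ge> 1"
  shows "((\<lambda>t. real a * ln t + ln (1 - t) - ln (1 - t ^ a)) has_real_derivative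
      log_slope_rate a y / (y * (1 - y))) (at y)"
proof -
  have ya: "y ^ a < 1" using assms by (simp add: power_less_one_iff)
  define p where "p = y ^ (a - 1)"
  have yp: "y ^ a = y * p" "y ^ (a - Suc 0) = p" using assms(3) by (cases a; simp add: p_def)+
  have "real a / y - 1 / (1 - y) + real a * p / (1 - y * p)
      = (real a * (1 - y) / (1 - y * p) - y) / (y * (1 - y))"
    using assms ya yp by (simp add: divide_simps) (simp add: algebra_simps)
  then show ?thesis
    using assms ya unfolding log_slope_rate_def
    by (auto intro!: derivative_eq_intros simp: yp)
qed

lemma ln_logit_slope:
  assumes "0 < t" "t < 1" "a \<ge> 1" "d \<ge> 1"
  shows "ln (logit_slope a d t) = ln (real d * real a) + (real a * ln t + ln (1 - t) - ln (1 - t ^ a))"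
proof -
  have "t ^ a < 1" using assms by (simp add: power_less_one_iff)
  then show ?thesis
    using assms unfolding logit_slope_def by (simp add: ln_mult ln_div ln_realpow)
qed

lemma logit_slope_le_tangent:
  assumes "a \<ge> 1" "d \<ge> 1" "0 < x" "x < 1" "0 < t" "t < 1"
  shows "logit_slope a d t \<le> logit_slope a d x * exp (log_slope_rate a x * (logit t - logit x))"
proof -
  define \<kappa> where "\<kappa> = log_slope_rate a x"
  define h where "h t = real a * ln t + ln (1 - t) - ln (1 - t ^ a) - \<kappa> * logit t" for t
  have h_deriv: "(h has_real_derivative (log_slope_rate a y - \<kappa>) / (y * (1 - y))) (at y)"
    if "0 < y" "y < 1" for y
    unfolding h_def[abs_def]
    by (rule DERIV_cong[OF DERIV_diff[OF has_real_derivative_log_slope[OF that assms(1)]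
          DERIV_cmult[OF has_real_derivative_logit[OF that]]]]) (simp add: diff_divide_distrib)
  \<comment> \<open>Up to a constant, \<open>h\<close> is \<open>ln (logit_slope a d)\<close> minus its tangent at \<open>x\<close> in the logit variable.\<close>
  have "h t \<le> h x"
  proof (cases "t \<le> x")
    case True
    show ?thesis
    proof (rule DERIV_nonneg_imp_nondecreasing[where f = h, OF True])
      fix y assume y: "t \<le> y" "y \<le> x"
      then have "0 \<le> (log_slope_rate a y - \<kappa>) / (y * (1 - y))"
        using log_slope_rate_antimono[of y x a] assms unfolding \<kappa>_def by simp
      then show "\<exists>D. (h has_real_derivative D) (at y) \<and> D \<ge> 0"
        using h_deriv[of y] y assms by (intro exI conjI) auto
    qed
  next
    case False
    show ?thesis
    proof (rule DERIV_nonpos_imp_nonincreasing[where f = h])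
      show "x \<le> t" using False by simp
      fix y assume y: "x \<le> y" "y \<le> t"
      then have "(log_slope_rate a y - \<kappa>) / (y * (1 - y)) \<le> 0"
        using log_slope_rate_antimono[of x y a] assms unfolding \<kappa>_def
        by (simp add: divide_nonpos_pos)
      then show "\<exists>D. (h has_real_derivative D) (at y) \<and> D \<le> 0"
        using h_deriv[of y] y assms by (intro exI conjI) auto
    qed
  qed
  then have "ln (logit_slope a d t) \<le> ln (logit_slope a d x) + \<kappa> * (logit t - logit x)"
    using ln_logit_slope[of t a d] ln_logit_slope[of x a d] assms
    unfolding h_def by (simp add: algebra_simps)
  then have "exp (ln (logit_slope a d t)) \<le> exp (ln (logit_slope a d x) + \<kappa> * (logit t - logit x))"
    by simp
  moreover have "0 < logit_slope a d s" if "0 < s" "s < 1" for s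
    using that assms unfolding logit_slope_def by (simp add: power_less_one_iff)
  ultimately show ?thesis
    using assms unfolding \<kappa>_def by (simp add: exp_add)
qed

text \<open>The derivative of this potential is \<open>(c exp (\<kappa> (logit t - logit x)) - logit_slope a d t) / (t (1 - t))\<close>,
  nonnegative by the tangent bound.\<close>

lemma logit_potential_mono:
  assumes "a \<ge> 1" "d \<ge> 1" "0 < x" "x < 1" "0 < s" "s \<le> t" "t < 1"
  defines "c \<equiv> logit_slope a d x" and "\<kappa> \<equiv> log_slope_rate a x"
  shows "real d * ln (1 - s ^ a) + c / \<kappa> * exp (\<kappa> * (logit s - logit x))
       \<le> real d * ln (1 - t ^ a) + c / \<kappa> * exp (\<kappa> * (logit t - logit x))"
proof (rule DERIV_nonneg_imp_nondecreasing[OF \<open>s \<le> t\<close>])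
  fix y assume "s \<le> y" "y \<le> t"
  then have y: "0 < y" "y < 1" using assms by auto
  have ya: "y ^ a < 1" using y assms by (simp add: power_less_one_iff)
  have \<kappa>: "0 < \<kappa>" unfolding \<kappa>_def using log_slope_rate_pos[of x a] assms by simp
  define E where "E = c * exp (\<kappa> * (logit y - logit x))"
  have "((\<lambda>t. real d * ln (1 - t ^ a) + c / \<kappa> * exp (\<kappa> * (logit t - logit x))) has_real_derivative
      E / (y * (1 - y)) - real d * real a * y ^ (a - 1) / (1 - y ^ a)) (at y)"
    using y ya \<kappa> unfolding E_def
    by (auto intro!: derivative_eq_intros has_real_derivative_logit[THEN DERIV_chain2]
        simp: divide_simps) (simp add: algebra_simps)
  moreover have "real d * real a * y ^ (a - 1) / (1 - y ^ a) = logit_slope a d y / (y * (1 - y))"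
  proof -
    have "y ^ a = y * y ^ (a - 1)" using assms(1) by (cases a) auto
    then show ?thesis using y ya unfolding logit_slope_def by (simp add: divide_simps)
  qed
  moreover have "logit_slope a d y / (y * (1 - y)) \<le> E / (y * (1 - y))"
    using logit_slope_le_tangent[OF assms(1-4) y] y unfolding E_def c_def \<kappa>_def
    by (intro divide_right_mono) auto
  ultimately show "\<exists>D. ((\<lambda>t. real d * ln (1 - t ^ a) + c / \<kappa> * exp (\<kappa> * (logit t - logit x)))
      has_real_derivative D) (at y) \<and> 0 \<le> D"
    by (intro exI conjI) auto
qed

lemma exp_one_minus_exp_minus_le:
  fixes \<alpha> :: real
  assumes "0 \<le> \<alpha>"
  shows "exp (1 - exp (- \<alpha>)) \<le> 1 + \<alpha>"
proof -
  define \<phi> where "\<phi> t = ln (1 + t) - 1 + exp (- t)" for t :: real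
  have "\<phi> 0 \<le> \<phi> \<alpha>"
  proof (rule DERIV_nonneg_imp_nondecreasing[where f = \<phi>, OF assms])
    fix t :: real assume t: "0 \<le> t" "t \<le> \<alpha>"
    have "(\<phi> has_real_derivative 1 / (1 + t) - exp (- t)) (at t)"
      unfolding \<phi>_def[abs_def] using t by (auto intro!: derivative_eq_intros)
    moreover have "exp (- t) \<le> 1 / (1 + t)"
      using exp_ge_add_one_self[of t] t by (simp add: exp_minus divide_simps)
    ultimately show "\<exists>D. (\<phi> has_real_derivative D) (at t) \<and> 0 \<le> D"
      by (intro exI conjI) auto
  qed
  then have "exp (1 - exp (- \<alpha>)) \<le> exp (ln (1 + \<alpha>))" unfolding \<phi>_def by simp
  also have "\<dots> = 1 + \<alpha>" using assms by simp
  finally show ?thesis .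
qed

lemma exp_cycle_bounds_contradiction:
  fixes c \<alpha> \<beta> :: real
  assumes "0 \<le> c" "c < 1" "0 < \<alpha>"
    and "\<alpha> \<le> c * (exp \<beta> - 1)" and "\<beta> \<le> c * (1 - exp (- \<alpha>))"
  shows False
proof -
  have "c * (1 - exp (- \<alpha>)) \<le> 1 - exp (- \<alpha>)"
    using assms(1-3) by (intro mult_left_le_one_le) auto
  then have "exp \<beta> \<le> exp (1 - exp (- \<alpha>))" using assms(5) by simp
  also have "\<dots> \<le> 1 + \<alpha>" using exp_one_minus_exp_minus_le assms(3) by simp
  finally have "c * (exp \<beta> - 1) \<le> c * \<alpha>" using assms(1) by (intro mult_left_mono) auto
  moreover have "c * \<alpha> < 1 * \<alpha>" using assms(2,3) by (intro mult_strict_right_mono)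
  ultimately show False using assms(4) by simp
qed

lemma lem56_g_no_two_cycle:
  assumes "a \<ge> 1" "d \<ge> 1" "0 < z" "z < x" "x < w" "w < 1"
    and "lem56_g a d z = w" "lem56_g a d w = z" "lem56_g a d x = x"
    and "logit_slope a d x < 1"
  shows False
proof -
  define c where "c = logit_slope a d x"
  define \<kappa> where "\<kappa> = log_slope_rate a x"
  define G where "G t = real d * ln (1 - t ^ a) + c / \<kappa> * exp (\<kappa> * (logit t - logit x))" for t
  have \<kappa>: "0 < \<kappa>" unfolding \<kappa>_def using log_slope_rate_pos[of x a] assms by simp
  have c: "0 \<le> c" unfolding c_def logit_slope_def
    using assms power_le_one[of x a] by simp
  have G_mono: "G s \<le> G t" if "0 < s" "s \<le> t" "t < 1" for s t
    unfolding G_def c_def \<kappa>_def using logit_potential_mono[OF assms(1,2) _ _ that] assms by simp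
  have logit_w: "logit w = real d * ln (1 - z ^ a)"
    and logit_z: "logit z = real d * ln (1 - w ^ a)"
    and logit_x: "logit x = real d * ln (1 - x ^ a)"
    using logit_lem56_g[of _ a d] assms by (metis less_imp_le less_trans)+
  define A where "A = logit x - logit z"
  define B where "B = logit w - logit x"
  have "0 < A" unfolding A_def logit_def using assms by (smt (verit) ln_less_cancel_iff)
  have "G x \<le> G w" using G_mono[of x w] assms by simp
  then have "logit x + c / \<kappa> \<le> logit z + c / \<kappa> * exp (\<kappa> * B)"
    unfolding G_def B_def logit_x[symmetric] logit_z[symmetric] by simp
  then have "A \<le> c / \<kappa> * (exp (\<kappa> * B) - 1)" unfolding A_def by (simp add: algebra_simps)
  from mult_left_mono[OF this, of \<kappa>] have "\<kappa> * A \<le> c * (exp (\<kappa> * B) - 1)"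
    using \<kappa> by simp
  moreover have "G z \<le> G x" using G_mono[of z x] assms by simp
  then have "logit w + c / \<kappa> * exp (- (\<kappa> * A)) \<le> logit x + c / \<kappa>"
    unfolding G_def A_def logit_x[symmetric] logit_w[symmetric] by (simp add: algebra_simps)
  then have "B \<le> c / \<kappa> * (1 - exp (- (\<kappa> * A)))" unfolding B_def by (simp add: algebra_simps)
  from mult_left_mono[OF this, of \<kappa>] have "\<kappa> * B \<le> c * (1 - exp (- (\<kappa> * A)))"
    using \<kappa> by simp
  ultimately show False
    using exp_cycle_bounds_contradiction[of c "\<kappa> * A" "\<kappa> * B"] c \<kappa> \<open>0 < A\<close> assms(10)
    unfolding c_def by simp
qed

lemma lem56_g_period_two_point:
  assumes "a \<ge> 1" "d \<ge> 1" "x \<in> {0..1}" "lem56_g a d x = x" "logit_slope a d x < 1"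
    and "z \<in> {0..1}" "lem56_g a d (lem56_g a d z) = z"
  shows "z = x"
proof (rule ccontr)
  assume "z \<noteq> x"
  define w where "w = lem56_g a d z"
  have x: "0 < x" "x < 1" using lem56_g_fixed_point[of a x d] assms by auto
  have w: "0 \<le> w" "w \<le> 1 / 2" using lem56_g_bounds[of z a d] assms unfolding w_def by auto
  have z: "0 \<le> z" "z \<le> 1 / 2" using lem56_g_bounds[of w a d] w assms unfolding w_def by auto
  have "0 < w" using lem56_g_pos[of z a d] z assms unfolding w_def by simp
  have "0 < z" using lem56_g_pos[of w a d] w assms unfolding w_def by simp
  consider "z < x" | "x < z" using \<open>z \<noteq> x\<close> by linarith
  then show False
  proof cases
    case 1
    then have "x < w" using lem56_g_strict_decreasing[OF assms(1,2), of z x] z assms unfolding w_def by simp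
    then show False
      using lem56_g_no_two_cycle[OF assms(1,2) \<open>0 < z\<close> 1 _ _ _ _ assms(4,5), of w] w assms(7)
      unfolding w_def by simp
  next
    case 2
    then have "w < x" using lem56_g_strict_decreasing[OF assms(1,2), of x z] z x unfolding w_def assms(4) by simp
    then show False
      using lem56_g_no_two_cycle[OF assms(1,2) \<open>0 < w\<close> _ 2 _ _ _ assms(4,5)] z assms(7)
      unfolding w_def by simp
  qed
qed

lemma lem56_g_strict_antimono_on:
  assumes "a \<ge> 1" "d \<ge> 1"
  shows "strict_antimono_on {0..1} (lem56_g a d)"
  by (rule monotone_onI) (use lem56_g_strict_decreasing[OF assms] in auto)

lemma lem56_g_ex1_fixed_point:
  assumes "a \<ge> 1" "d \<ge> 1"
  shows "\<exists>!x. x \<in> {0..1} \<and> lem56_g a d x = x"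
proof -
  have "\<exists>x. 0 \<le> x \<and> x \<le> 1 \<and> lem56_g a d x - x = 0"
    using lem56_g_bounds[of 0 a d] lem56_g_bounds[of 1 a d]
    by (intro IVT2') (auto intro!: continuous_intros continuous_on_lem56_g)
  moreover have "x = y" if "x \<in> {0..1}" "y \<in> {0..1}" "lem56_g a d x = x" "lem56_g a d y = y" for x y
    using that lem56_g_strict_decreasing[OF assms, of x y] lem56_g_strict_decreasing[OF assms, of y x]
    by (cases x y rule: linorder_cases) auto
  ultimately show ?thesis by auto
qed

theorem lemma56:
  fixes k \<Delta> :: nat
  assumes "k \<ge> 2" and "\<Delta> \<ge> 2"
  shows "strict_antimono_on {0..1} (lem56_f k \<Delta>)
    \<and> (\<exists>!x. x \<in> {0..1} \<and> lem56_f k \<Delta> x = x)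
    \<and> (\<forall>x. x \<in> {0..1} \<and> lem56_f k \<Delta> x = x \<longrightarrow>
          \<bar>deriv (lem56_f k \<Delta>) x\<bar> =
            real (\<Delta> - 1) * real (k - 1) * x ^ (k - 1) * (1 - x) / (1 - x ^ (k - 1))
        \<and> (\<bar>deriv (lem56_f k \<Delta>) x\<bar> < 1 \<longrightarrow>
            (\<forall>z \<in> {0..1}. lem56_f k \<Delta> (lem56_f k \<Delta> z) = z \<longrightarrow> z = x)))"
proof -
  have a: "k - 1 \<ge> 1" and d: "\<Delta> - 1 \<ge> 1" using assms by auto
  show ?thesis
    unfolding lem56_f_eq_lem56_g
    using lem56_g_strict_antimono_on[OF a d] lem56_g_ex1_fixed_point[OF a d]
      abs_deriv_lem56_g_fixed_point[OF a d] lem56_g_period_two_point[OF a d]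
    unfolding logit_slope_def by auto
qed

end
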